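(* Let $G$ be a finite graph with maximum degree $\Delta$ and let $\mathcal{V}=\{V_1,\ldots,V_n\}$ be a partition of $V(G)$ with $|V_i|\ge2\Delta+1$ for all $i$. Then $\mathbf{RG}(\mathcal{I}(G),\mathcal{V})$ is connected.
   Context: $\mathcal{I}(G)$ is the complex of independent sets of $G$. An independent transversal is an independent set of $G$ containing exactly one vertex from each $V_i$. $\mathbf{RG}(\mathcal{I}(G),\mathcal{V})$ is the graph on the independent transversals, two being adjacent if their union is an independent set of size $n+1$. *)

theory Defs
  imports Main "HOL-Library.Disjoint_Sets"
begin

definition simple_graph :: "'a set \<Rightarrow> ('a \<Rightarrow> 'a \<Rightarrow> bool) \<Rightarrow> bool" where
  "simple_graph VG E \<longleftrightarrow> finite VG \<and> (\<forall>u v. E u v \<longrightarrow> E v u)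
     \<and> (\<forall>v. \<not> E v v) \<and> (\<forall>u v. E u v \<longrightarrow> u \<in> VG \<and> v \<in> VG)"

definition degree :: "'a set \<Rightarrow> ('a \<Rightarrow> 'a \<Rightarrow> bool) \<Rightarrow> 'a \<Rightarrow> nat" where
  "degree VG E v = card {u \<in> VG. E v u}"

definition max_degree :: "'a set \<Rightarrow> ('a \<Rightarrow> 'a \<Rightarrow> bool) \<Rightarrow> nat" where
  "max_degree VG E = Max (insert 0 (degree VG E ` VG))"

(* independent sets of G, i.e. the faces of the complex I(G) *)
definition independent :: "'a set \<Rightarrow> ('a \<Rightarrow> 'a \<Rightarrow> bool) \<Rightarrow> 'a set \<Rightarrow> bool" where
  "independent VG E S \<longleftrightarrow> S \<subseteq> VG \<and> (\<forall>u\<in>S. \<forall>v\<in>S. \<not> E u v)"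

definition indep_transversal ::
  "'a set \<Rightarrow> ('a \<Rightarrow> 'a \<Rightarrow> bool) \<Rightarrow> 'a set set \<Rightarrow> 'a set \<Rightarrow> bool" where
  "indep_transversal VG E P T \<longleftrightarrow> independent VG E T \<and> T \<subseteq> \<Union>P
     \<and> (\<forall>X\<in>P. card (T \<inter> X) = 1)"

definition RG_adj ::
  "'a set \<Rightarrow> ('a \<Rightarrow> 'a \<Rightarrow> bool) \<Rightarrow> 'a set set \<Rightarrow> 'a set \<Rightarrow> 'a set \<Rightarrow> bool" where
  "RG_adj VG E P S T \<longleftrightarrow> indep_transversal VG E P S \<and> indep_transversal VG E P T
     \<and> independent VG E (S \<union> T) \<and> card (S \<union> T) = card P + 1"

definition RG_connected :: "'a set \<Rightarrow> ('a \<Rightarrow> 'a \<Rightarrow> bool) \<Rightarrow> 'a set set \<Rightarrow> bool" where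
  "RG_connected VG E P \<longleftrightarrow>
     (\<forall>S T. indep_transversal VG E P S \<longrightarrow> indep_transversal VG E P T
        \<longrightarrow> (RG_adj VG E P)\<^sup>*\<^sup>* S T)"

end

theory Submission
  imports Defs
begin

text \<open>
  The argument is Haxell's alternating tree method. For independent transversals \<open>S \<noteq> T\<close> we
  walk in \<open>RG\<close> from \<open>S\<close> and from \<open>T\<close> to transversals that differ in fewer classes. A vertex \<open>x\<close>
  with no neighbour in a transversal can be exchanged for the vertex in its class, which is an
  edge of \<open>RG\<close>. If no vertex of \<open>S - T\<close> or \<open>T - S\<close> can be exchanged like this, we grow a tree
  from the classes where \<open>S\<close> and \<open>T\<close> differ: each new vertex lies in a reached class, is
  independent of the tree, and its neighbours in \<open>S \<union> T\<close> open new classes. The tree has at most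
  \<open>2 |W|\<close> vertices in the reached classes \<open>W\<close>, which contain at least \<open>(2 \<Delta> + 1) |W|\<close>
  vertices, so it can be extended until some vertex has no neighbour in \<open>S \<union> T\<close>. That vertex is
  exchanged into both \<open>S\<close> and \<open>T\<close>: in a class where they differ this makes progress, otherwise
  the tree is pruned, and a lexicographic potential built from the neighbour counts decreases.
\<close>

lemma lex_less_thanI:
  assumes "length xs = length ys" "j < length xs" "\<forall>q<j. xs ! q = ys ! q" "xs ! j < ys ! j"
  shows "(xs, ys) \<in> lex less_than"
proof -
  have "take j xs = take j ys"
    using assms by (intro nth_equalityI) auto
  then have "xs = take j xs @ xs ! j # drop (Suc j) xs" "ys = take j xs @ ys ! j # drop (Suc j) ys"
    using assms(1,2) by (metis id_take_nth_drop)+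
  then show ?thesis
    unfolding lex_conv using assms(1,4) by blast
qed

section \<open>Classes and independent transversals\<close>

locale partitioned_graph =
  fixes VG :: "'a set" and E :: "'a \<Rightarrow> 'a \<Rightarrow> bool" and P :: "'a set set"
  assumes simple_graph: "simple_graph VG E" and partition: "partition_on VG P"
begin

abbreviation "\<Delta> \<equiv> max_degree VG E"
abbreviation "IT \<equiv> indep_transversal VG E P"
abbreviation "adj \<equiv> RG_adj VG E P"

lemma finite_VG: "finite VG"
  using simple_graph by (simp add: simple_graph_def)

lemma E_sym: "E u v \<Longrightarrow> E v u"
  using simple_graph by (simp add: simple_graph_def)

lemma E_irrefl: "\<not> E v v"
  using simple_graph by (simp add: simple_graph_def)

lemma E_in_VG: "E u v \<Longrightarrow> u \<in> VG \<and> v \<in> VG"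
  using simple_graph by (simp add: simple_graph_def)

lemma Union_P: "\<Union>P = VG"
  using partition by (simp add: partition_on_def)

lemma finite_P: "finite P"
  using finite_elements[OF finite_VG partition] .

lemma class_subset: "X \<in> P \<Longrightarrow> X \<subseteq> VG"
  using Union_P by blast

lemma finite_class: "X \<in> P \<Longrightarrow> finite X"
  using class_subset finite_VG finite_subset by blast

lemma class_unique: "X \<in> P \<Longrightarrow> Y \<in> P \<Longrightarrow> v \<in> X \<Longrightarrow> v \<in> Y \<Longrightarrow> X = Y"
  using disjointD[OF partition_onD2[OF partition]] by blast

lemma card_neighbours_le: "card {u \<in> VG. E v u} \<le> \<Delta>"
proof (cases "v \<in> VG")
  case True
  have "degree VG E v \<le> \<Delta>"
    unfolding max_degree_def using True finite_VG by (simp add: Max_ge)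
  then show ?thesis
    unfolding degree_def .
next
  case False
  then have "{u \<in> VG. E v u} = {}"
    using E_in_VG by blast
  then show ?thesis
    by (metis card.empty zero_le)
qed

lemma exists_non_neighbour:
  assumes "finite D" "card D * \<Delta> < card A"
  shows "\<exists>x\<in>A. \<forall>d\<in>D. \<not> E x d"
proof -
  let ?N = "\<Union>d\<in>D. {v \<in> VG. E d v}"
  have "card ?N \<le> (\<Sum>d\<in>D. card {v \<in> VG. E d v})"
    by (rule card_UN_le[OF assms(1)])
  also have "\<dots> \<le> card D * \<Delta>"
    using sum_bounded_above[of D "\<lambda>d. card {v \<in> VG. E d v}" \<Delta>] card_neighbours_le by simp
  finally have card_N: "card ?N < card A"
    using assms(2) by linarith
  have "\<not> A \<subseteq> ?N"
  proof
    assume "A \<subseteq> ?N"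
    moreover have "finite ?N"
      by (rule finite_subset[OF _ finite_VG]) blast
    ultimately show False
      using card_mono card_N leD by blast
  qed
  then obtain x where "x \<in> A" "x \<notin> ?N"
    by blast
  then show ?thesis
    using E_sym E_in_VG by blast
qed

definition class_of :: "'a \<Rightarrow> 'a set" where
  "class_of v = (THE X. X \<in> P \<and> v \<in> X)"

lemma class_of_eq: "X \<in> P \<Longrightarrow> v \<in> X \<Longrightarrow> class_of v = X"
  unfolding class_of_def using class_unique by (intro the_equality) auto

lemma class_of_in_P: "v \<in> VG \<Longrightarrow> class_of v \<in> P"
  using Union_P class_of_eq by blast

lemma mem_class_of: "v \<in> VG \<Longrightarrow> v \<in> class_of v"
  using Union_P class_of_eq by blast

lemma class_of_in_Union: "W \<subseteq> P \<Longrightarrow> v \<in> \<Union>W \<Longrightarrow> class_of v \<in> W"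
  using class_of_eq by blast

lemma IT_subset: "IT S \<Longrightarrow> S \<subseteq> VG"
  by (simp add: indep_transversal_def independent_def)

lemma finite_IT: "IT S \<Longrightarrow> finite S"
  using IT_subset finite_VG finite_subset by blast

lemma IT_no_edge: "IT S \<Longrightarrow> u \<in> S \<Longrightarrow> v \<in> S \<Longrightarrow> \<not> E u v"
  by (simp add: indep_transversal_def independent_def)

lemma IT_Int_class: "IT S \<Longrightarrow> X \<in> P \<Longrightarrow> \<exists>s. S \<inter> X = {s}"
  by (simp add: indep_transversal_def card_1_singleton_iff)

lemma IT_Int_class_of:
  assumes "IT S" "s \<in> S"
  shows "S \<inter> class_of s = {s}"
proof -
  have "s \<in> VG"
    using assms IT_subset by blast
  then obtain s' where "S \<inter> class_of s = {s'}"
    using IT_Int_class[OF assms(1) class_of_in_P] by blast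
  moreover have "s \<in> S \<inter> class_of s"
    using assms(2) mem_class_of[OF \<open>s \<in> VG\<close>] by blast
  ultimately show ?thesis
    by (metis singletonD)
qed

lemma inj_on_class_of_IT: "IT S \<Longrightarrow> inj_on class_of S"
proof (rule inj_onI)
  fix s s'
  assume "IT S" "s \<in> S" "s' \<in> S" "class_of s = class_of s'"
  then have "{s} = {s'}"
    using IT_Int_class_of by metis
  then show "s = s'"
    by simp
qed

lemma card_IT: "IT S \<Longrightarrow> card S = card P"
proof -
  assume S: "IT S"
  have "class_of ` S = P"
  proof
    show "class_of ` S \<subseteq> P"
      using S IT_subset class_of_in_P by blast
    show "P \<subseteq> class_of ` S"
    proof
      fix X
      assume "X \<in> P"
      then obtain s where "S \<inter> X = {s}"
        using S IT_Int_class by blast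
      then show "X \<in> class_of ` S"
        using class_of_eq[OF \<open>X \<in> P\<close>] by blast
    qed
  qed
  then show ?thesis
    using card_image[OF inj_on_class_of_IT[OF S]] by simp
qed

lemma card_Diff_IT_commute: "IT S \<Longrightarrow> IT T \<Longrightarrow> card (S - T) = card (T - S)"
  by (simp add: card_Diff_subset_Int finite_IT card_IT Int_commute)

lemma RG_adj_sym: "adj S T \<Longrightarrow> adj T S"
  unfolding RG_adj_def by (simp add: Un_commute)

lemma RG_adj_IT: "adj S T \<Longrightarrow> IT T"
  unfolding RG_adj_def by simp

section \<open>Exchanges\<close>

definition exchange :: "'a \<Rightarrow> 'a set \<Rightarrow> 'a set" where
  "exchange x S = insert x (S - class_of x)"

lemma exchange_Int_class_of: "x \<in> VG \<Longrightarrow> exchange x S \<inter> class_of x = {x}"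
  using mem_class_of unfolding exchange_def by blast

lemma exchange_Int_other_class:
  assumes "x \<in> VG" "X \<in> P" "X \<noteq> class_of x"
  shows "exchange x S \<inter> X = S \<inter> X"
proof -
  have "X \<inter> class_of x = {}"
    using assms class_of_in_P disjointD[OF partition_onD2[OF partition]] by blast
  then show ?thesis
    using mem_class_of[OF assms(1)] unfolding exchange_def by blast
qed

lemma RG_adj_exchange:
  assumes S: "IT S" and x: "x \<in> VG" "x \<notin> S" and free: "\<forall>s\<in>S. \<not> E x s"
  shows "adj S (exchange x S)"
proof -
  have indep: "independent VG E (insert x S)"
    unfolding independent_def
  proof (intro conjI ballI)
    show "insert x S \<subseteq> VG"
      using S x IT_subset by blast
    fix u v
    assume "u \<in> insert x S" "v \<in> insert x S"
    then show "\<not> E u v"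
      using free IT_no_edge[OF S] E_sym[of u v] E_irrefl[of u] by auto
  qed
  have "IT (exchange x S)"
    unfolding indep_transversal_def
  proof (intro conjI ballI)
    show "independent VG E (exchange x S)"
      using indep unfolding independent_def exchange_def by blast
    show "exchange x S \<subseteq> \<Union>P"
      using S x IT_subset Union_P unfolding exchange_def by blast
    fix X
    assume X: "X \<in> P"
    show "card (exchange x S \<inter> X) = 1"
    proof (cases "X = class_of x")
      case True
      then show ?thesis
        using exchange_Int_class_of[OF x(1)] by simp
    next
      case False
      then show ?thesis
        using exchange_Int_other_class[OF x(1) X] S X by (simp add: indep_transversal_def)
    qed
  qed
  moreover have "S \<union> exchange x S = insert x S"
    unfolding exchange_def by blast
  moreover have "card (insert x S) = card P + 1"
    using S x finite_IT card_IT by simp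
  ultimately show ?thesis
    using S indep unfolding RG_adj_def by simp
qed

definition diff_classes :: "'a set \<Rightarrow> 'a set \<Rightarrow> 'a set set" where
  "diff_classes S T = {X \<in> P. S \<inter> X \<noteq> T \<inter> X}"

lemma diff_classes_subset_P: "diff_classes S T \<subseteq> P"
  unfolding diff_classes_def by blast

lemma diff_classes_commute: "diff_classes S T = diff_classes T S"
  unfolding diff_classes_def by auto

lemma diff_classes_self: "diff_classes S S = {}"
  unfolding diff_classes_def by simp

lemma diff_classes_nonempty:
  assumes "IT S" "IT T" "S \<noteq> T"
  shows "diff_classes S T \<noteq> {}"
proof
  assume "diff_classes S T = {}"
  then have "(\<Union>X\<in>P. S \<inter> X) = (\<Union>X\<in>P. T \<inter> X)"
    unfolding diff_classes_def by (intro SUP_cong) auto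
  moreover have "S = (\<Union>X\<in>P. S \<inter> X)" "T = (\<Union>X\<in>P. T \<inter> X)"
    using IT_subset[OF assms(1)] IT_subset[OF assms(2)] Union_P by blast+
  ultimately show False
    using assms(3) by simp
qed

lemma class_of_in_diff_classes:
  assumes "t \<in> T" "t \<notin> S" "t \<in> VG"
  shows "class_of t \<in> diff_classes S T"
  using assms class_of_in_P[OF assms(3)] mem_class_of[OF assms(3)] unfolding diff_classes_def by blast

lemma card_Diff_diff_class_less:
  assumes S: "IT S" and T: "IT T" and X: "X \<in> diff_classes S T"
  shows "card (S - T - X) < card (S - T)"
proof -
  have XP: "X \<in> P" and differ: "S \<inter> X \<noteq> T \<inter> X"
    using X unfolding diff_classes_def by auto
  obtain s where s: "S \<inter> X = {s}"
    using IT_Int_class[OF S XP] by blast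
  obtain t where t: "T \<inter> X = {t}"
    using IT_Int_class[OF T XP] by blast
  have "s \<in> S - T" "s \<in> X"
    using s t differ by auto
  then show ?thesis
    using finite_IT[OF S] by (intro psubset_card_mono) auto
qed

lemma exchange_Diff: "t \<in> T \<Longrightarrow> exchange t S - T = S - T - class_of t"
  unfolding exchange_def by auto

lemma exchange_Diff_exchange: "x \<in> VG \<Longrightarrow> exchange x S - exchange x T = S - T - class_of x"
  using mem_class_of[of x] unfolding exchange_def by auto

lemma exchange_Un: "exchange x S \<union> exchange x T = exchange x (S \<union> T)"
  unfolding exchange_def by auto

lemma Diff_agreeing_class:
  "x \<in> VG \<Longrightarrow> class_of x \<notin> diff_classes S T \<Longrightarrow> S - T - class_of x = S - T"
  using class_of_in_P[of x] unfolding diff_classes_def by blast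

lemma diff_classes_exchange:
  assumes x: "x \<in> VG" and agree: "class_of x \<notin> diff_classes S T"
  shows "diff_classes (exchange x S) (exchange x T) = diff_classes S T"
  unfolding diff_classes_def
proof (intro Collect_cong conj_cong refl)
  fix X
  assume X: "X \<in> P"
  show "exchange x S \<inter> X \<noteq> exchange x T \<inter> X \<longleftrightarrow> S \<inter> X \<noteq> T \<inter> X"
  proof (cases "X = class_of x")
    case True
    then show ?thesis
      using agree X exchange_Int_class_of[OF x] unfolding diff_classes_def by auto
  next
    case False
    then show ?thesis
      using exchange_Int_other_class[OF x X] by simp
  qed
qed

lemma neighbour_in_diff_classes:
  assumes "IT S" "d \<in> S" "t \<in> T" "E d t"
  shows "class_of t \<in> diff_classes S T"
proof -
  have "t \<notin> S"
    using IT_no_edge[OF assms(1) assms(2)] assms(4) by blast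
  then show ?thesis
    using class_of_in_diff_classes[OF assms(3)] E_in_VG[OF assms(4)] by blast
qed

lemma not_shared_if_diff_class:
  assumes "IT S" "IT T" "d \<in> S" "class_of d \<in> diff_classes S T"
  shows "d \<notin> T"
proof
  assume "d \<in> T"
  then have "S \<inter> class_of d = T \<inter> class_of d"
    using IT_Int_class_of assms(1-3) by metis
  then show False
    using assms(4) unfolding diff_classes_def by blast
qed

lemma diff_class_vertex_neighbour:
  assumes S: "IT S" and T: "IT T"
    and dom_S: "\<forall>s\<in>S - T. \<exists>t\<in>T. E s t" and dom_T: "\<forall>t\<in>T - S. \<exists>s\<in>S. E t s"
    and d: "d \<in> S \<union> T" "class_of d \<in> diff_classes S T"
  shows "\<exists>t. E d t \<and> t \<in> S \<union> T \<and> class_of t \<in> diff_classes S T"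
proof (cases "d \<in> S")
  case True
  then obtain t where "t \<in> T" "E d t"
    using dom_S not_shared_if_diff_class[OF S T True d(2)] by blast
  then show ?thesis
    using neighbour_in_diff_classes[OF S True] by blast
next
  case False
  then have "d \<in> T"
    using d(1) by blast
  then obtain s where "s \<in> S" "E d s"
    using dom_T False by blast
  then have "class_of s \<in> diff_classes T S"
    by (rule neighbour_in_diff_classes[OF T \<open>d \<in> T\<close>])
  then show ?thesis
    using \<open>E d s\<close> \<open>s \<in> S\<close> diff_classes_commute[of T S] by blast
qed

lemma Un_Int_agreeing_class:
  assumes "IT S" "IT T" "X \<in> P" "X \<notin> diff_classes S T"
  obtains s where "(S \<union> T) \<inter> X = {s}"
proof -
  obtain s where s: "S \<inter> X = {s}"
    using IT_Int_class[OF assms(1,3)] by blast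
  moreover have "S \<inter> X = T \<inter> X"
    using assms(3,4) unfolding diff_classes_def by blast
  ultimately have "(S \<union> T) \<inter> X = {s}"
    by (simp add: Int_Un_distrib2)
  then show ?thesis
    by (rule that)
qed

section \<open>Alternating trees\<close>

definition blockers :: "'a set \<Rightarrow> 'a \<Rightarrow> 'a set" where
  "blockers U y = {u \<in> U. E y u}"

lemma finite_blockers: "U \<subseteq> VG \<Longrightarrow> finite (blockers U y)"
  by (rule finite_subset[OF _ finite_VG]) (auto simp: blockers_def)

lemma card_blockers_le: "U \<subseteq> VG \<Longrightarrow> card (blockers U y) \<le> \<Delta>"
proof -
  assume "U \<subseteq> VG"
  then have "card (blockers U y) \<le> card {u \<in> VG. E y u}"
    unfolding blockers_def using finite_VG by (intro card_mono) auto
  then show ?thesis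
    using card_neighbours_le[of y] by linarith
qed

lemma blockers_exchange:
  assumes "x \<in> VG" "\<not> E y x" "class_of x \<notin> class_of ` blockers U y"
  shows "blockers (exchange x U) y = blockers U y"
proof -
  have "u \<notin> class_of x" if "u \<in> blockers U y" for u
    using that assms(3) class_of_eq[OF class_of_in_P[OF assms(1)]] by blast
  then show ?thesis
    using assms(2) unfolding blockers_def exchange_def by blast
qed

lemma card_blockers_exchange_less:
  assumes U: "U \<subseteq> VG" and x: "x \<in> VG" "\<not> E y x" and hit: "class_of x \<in> class_of ` blockers U y"
  shows "card (blockers (exchange x U) y) < card (blockers U y)"
proof -
  obtain u where u: "u \<in> blockers U y" "class_of u = class_of x"
    using hit by auto
  then have "u \<in> class_of x"
    using U mem_class_of[of u] unfolding blockers_def by auto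
  then have "blockers (exchange x U) y \<subseteq> blockers U y - {u}"
    using x(2) unfolding blockers_def exchange_def by auto
  then have "card (blockers (exchange x U) y) \<le> card (blockers U y - {u})"
    using finite_blockers[OF U] by (intro card_mono) auto
  also have "\<dots> < card (blockers U y)"
    using finite_blockers[OF U] u(1) by (rule card_Diff1_less)
  finally show ?thesis .
qed

text \<open>
  An admissible sequence encodes Haxell's alternating tree: \<open>I\<close> are the root classes, and the
  classes of the blockers (neighbours in \<open>U\<close>) of each added vertex become reachable.
\<close>

definition tree_classes :: "'a set set \<Rightarrow> 'a set \<Rightarrow> 'a list \<Rightarrow> 'a set set" where
  "tree_classes I U ys = I \<union> (\<Union>y\<in>set ys. class_of ` blockers U y)"

definition tree_vertices :: "'a set set \<Rightarrow> 'a set \<Rightarrow> 'a list \<Rightarrow> 'a set" where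
  "tree_vertices I U ys = (U \<inter> \<Union>(tree_classes I U ys)) \<union> set ys"

definition admissible_next :: "'a set set \<Rightarrow> 'a set \<Rightarrow> 'a list \<Rightarrow> 'a \<Rightarrow> bool" where
  "admissible_next I U ys x \<longleftrightarrow> x \<in> \<Union>(tree_classes I U ys) \<and> x \<notin> U \<and> x \<notin> set ys
     \<and> (\<forall>d\<in>tree_vertices I U ys. \<not> E x d)"

definition admissible :: "'a set set \<Rightarrow> 'a set \<Rightarrow> 'a list \<Rightarrow> bool" where
  "admissible I U xs \<longleftrightarrow> (\<forall>p<length xs. admissible_next I U (take p xs) (xs ! p))"

lemma admissible_Nil: "admissible I U []"
  unfolding admissible_def by simp

lemma admissible_snoc: "admissible I U (xs @ [x]) \<longleftrightarrow> admissible I U xs \<and> admissible_next I U xs x"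
  unfolding admissible_def by (auto simp: nth_append less_Suc_eq)

lemma admissible_appendD:
  assumes "admissible I U (xs @ ys)"
  shows "admissible I U xs"
  unfolding admissible_def
proof (intro allI impI)
  fix p
  assume p: "p < length xs"
  then have "p < length (xs @ ys)"
    by simp
  then have "admissible_next I U (take p (xs @ ys)) ((xs @ ys) ! p)"
    using assms unfolding admissible_def by blast
  then show "admissible_next I U (take p xs) (xs ! p)"
    using p by (simp add: nth_append)
qed

lemma admissible_disjoint: "admissible I U xs \<Longrightarrow> set xs \<inter> U = {}"
  unfolding admissible_def admissible_next_def by (auto simp: in_set_conv_nth)

lemma tree_classes_subset_P: "I \<subseteq> P \<Longrightarrow> U \<subseteq> VG \<Longrightarrow> tree_classes I U ys \<subseteq> P"
  unfolding tree_classes_def blockers_def using class_of_in_P by blast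

lemma tree_classes_mono: "set ys \<subseteq> set zs \<Longrightarrow> tree_classes I U ys \<subseteq> tree_classes I U zs"
  unfolding tree_classes_def by blast

lemma tree_classes_cong:
  "\<forall>y\<in>set ys. blockers U' y = blockers U y \<Longrightarrow> tree_classes I U' ys = tree_classes I U ys"
  unfolding tree_classes_def by simp

lemma class_of_blocker_new:
  assumes "admissible_next I U ys x" "u \<in> blockers U x" "U \<subseteq> VG"
  shows "class_of u \<notin> tree_classes I U ys"
proof
  assume "class_of u \<in> tree_classes I U ys"
  moreover have "u \<in> U" "E x u" "u \<in> class_of u"
    using assms(2,3) mem_class_of unfolding blockers_def by auto
  ultimately have "u \<in> tree_vertices I U ys"
    unfolding tree_vertices_def by blast
  then show False
    using assms(1) \<open>E x u\<close> unfolding admissible_next_def by blast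
qed

lemma card_tree_classes:
  assumes "admissible I U xs" "I \<subseteq> P" "U \<subseteq> VG" "\<forall>y\<in>set xs. blockers U y \<noteq> {}"
  shows "card I + length xs \<le> card (tree_classes I U xs)"
  using assms(1,4)
proof (induction xs rule: rev_induct)
  case Nil
  then show ?case
    by (simp add: tree_classes_def)
next
  case (snoc y ys)
  then have adm: "admissible I U ys" and next_y: "admissible_next I U ys y"
    using admissible_snoc by auto
  obtain u where u: "u \<in> blockers U y"
    using snoc.prems(2) by auto
  let ?W = "tree_classes I U ys" and ?W' = "tree_classes I U (ys @ [y])"
  have sub: "insert (class_of u) ?W \<subseteq> ?W'"
    using u unfolding tree_classes_def by auto
  have fin: "finite ?W'"
    using finite_subset[OF tree_classes_subset_P[OF assms(2,3)] finite_P] .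
  have "card (insert (class_of u) ?W) = Suc (card ?W)"
    using class_of_blocker_new[OF next_y u assms(3)] finite_subset[OF sub fin] by simp
  moreover have "card (insert (class_of u) ?W) \<le> card ?W'"
    by (rule card_mono[OF fin sub])
  ultimately show ?case
    using snoc adm by simp
qed

lemma length_admissible_less:
  assumes "admissible I U xs" "I \<subseteq> P" "I \<noteq> {}" "U \<subseteq> VG" "\<forall>y\<in>set xs. blockers U y \<noteq> {}"
  shows "length xs < card P"
proof -
  have "card (tree_classes I U xs) \<le> card P"
    by (rule card_mono[OF finite_P tree_classes_subset_P[OF assms(2,4)]])
  moreover have "card I > 0"
    using assms(3) finite_subset[OF assms(2) finite_P] by (simp add: card_gt_0_iff)
  ultimately show ?thesis
    using card_tree_classes[OF assms(1,2,4,5)] by linarith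
qed

lemma class_disjoint_Union:
  assumes "W \<subseteq> P" "X \<in> P" "X \<notin> W"
  shows "X \<inter> \<Union>W = {}"
proof (rule ccontr)
  assume "X \<inter> \<Union>W \<noteq> {}"
  then obtain v Y where "v \<in> X" "Y \<in> W" "v \<in> Y"
    by blast
  then show False
    using class_unique[OF assms(2) _ \<open>v \<in> X\<close>, of Y] assms by blast
qed

lemma admissible_change_base:
  assumes adm: "admissible I U (as @ [y])"
    and same: "\<forall>a\<in>set as. blockers U' a = blockers U a"
    and disj: "((U - U') \<union> (U' - U)) \<inter> (\<Union>(tree_classes I U as) \<union> set (as @ [y])) = {}"
  shows "admissible I U' (as @ [y])"
  unfolding admissible_def
proof (intro allI impI)
  fix p
  assume p: "p < length (as @ [y])"
  let ?ys = "take p (as @ [y])" and ?x = "(as @ [y]) ! p"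
  have ys_as: "set ?ys \<subseteq> set as"
    using p by (simp add: take_append set_take_subset)
  then have W: "tree_classes I U' ?ys = tree_classes I U ?ys"
    using same by (intro tree_classes_cong) blast
  have "\<Union>(tree_classes I U ?ys) \<subseteq> \<Union>(tree_classes I U as)"
    using tree_classes_mono[OF ys_as] by blast
  then have "U' \<inter> \<Union>(tree_classes I U' ?ys) = U \<inter> \<Union>(tree_classes I U ?ys)"
    using disj unfolding W by blast
  moreover have "?x \<in> U' \<longleftrightarrow> ?x \<in> U"
    using disj nth_mem[OF p] by blast
  moreover have "admissible_next I U ?ys ?x"
    using adm p unfolding admissible_def by blast
  ultimately show "admissible_next I U' ?ys ?x"
    unfolding admissible_next_def tree_vertices_def W by simp
qed

text \<open>
  The padding \<open>\<Delta> + 1\<close> exceeds every blocker count, so appending a vertex decreases the potential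
  lexicographically; the length \<open>card P\<close> bounds every admissible sequence of blocked vertices.
\<close>

definition potential :: "'a set \<Rightarrow> 'a list \<Rightarrow> nat list" where
  "potential U xs =
     map (\<lambda>q. if q < length xs then card (blockers U (xs ! q)) else Suc \<Delta>) [0..<card P]"

lemma length_potential: "length (potential U xs) = card P"
  unfolding potential_def by simp

lemma nth_potential:
  "q < card P \<Longrightarrow> potential U xs ! q = (if q < length xs then card (blockers U (xs ! q)) else Suc \<Delta>)"
  unfolding potential_def by simp

lemma potential_snoc_less:
  assumes "U \<subseteq> VG" "length xs < card P"
  shows "(potential U (xs @ [x]), potential U xs) \<in> lex less_than"
proof (rule lex_less_thanI)
  show "\<forall>q<length xs. potential U (xs @ [x]) ! q = potential U xs ! q"
    using assms(2) by (simp add: nth_potential nth_append)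
  show "potential U (xs @ [x]) ! length xs < potential U xs ! length xs"
    using assms card_blockers_le[OF assms(1)] by (simp add: nth_potential le_imp_less_Suc)
qed (use assms in \<open>simp_all add: length_potential\<close>)

lemma potential_truncate_less:
  assumes "length as < card P" "\<forall>a\<in>set as. blockers U' a = blockers U a"
    "card (blockers U' y) < card (blockers U y)"
  shows "(potential U' (as @ [y]), potential U (as @ y # bs)) \<in> lex less_than"
proof (rule lex_less_thanI)
  show "\<forall>q<length as. potential U' (as @ [y]) ! q = potential U (as @ y # bs) ! q"
    using assms(1,2) by (simp add: nth_potential nth_append)
qed (use assms in \<open>simp_all add: length_potential nth_potential\<close>)

lemma admissible_next_in_VG: "admissible_next I U ys x \<Longrightarrow> I \<subseteq> P \<Longrightarrow> U \<subseteq> VG \<Longrightarrow> x \<in> VG"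
  using tree_classes_subset_P[of I U ys] Union_P unfolding admissible_next_def by blast

lemma first_hit_of_class:
  assumes "admissible_next I U ys x" "I \<subseteq> P" "U \<subseteq> VG" "class_of x \<notin> I"
  obtains as y bs where "ys = as @ y # bs" "class_of x \<in> class_of ` blockers U y"
    "class_of x \<notin> tree_classes I U as"
proof -
  have "x \<in> \<Union>(tree_classes I U ys)"
    using assms(1) unfolding admissible_next_def by blast
  then have "class_of x \<in> tree_classes I U ys"
    using class_of_in_Union[OF tree_classes_subset_P[OF assms(2,3)]] by blast
  then have "\<exists>y\<in>set ys. class_of x \<in> class_of ` blockers U y"
    using assms(4) unfolding tree_classes_def by blast
  from split_list_first_prop[OF this] obtain as y bs where
    "ys = as @ y # bs" "class_of x \<in> class_of ` blockers U y"
    "\<forall>a\<in>set as. class_of x \<notin> class_of ` blockers U a"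
    by blast
  then show ?thesis
    using that assms(4) unfolding tree_classes_def by blast
qed

text \<open>
  Exchanging \<open>x\<close> changes \<open>U\<close> only inside the class of \<open>x\<close>, which the classes reached
  through \<open>as\<close> avoid; so the part of the tree grown by \<open>as\<close> is unaffected.
\<close>

lemma admissible_exchange_unreached:
  assumes I: "I \<subseteq> P" and U: "U \<subseteq> VG" and adm: "admissible I U (as @ y # bs @ [x])"
    and unreached: "class_of x \<notin> tree_classes I U as"
  shows "admissible I (exchange x U) (as @ [y])"
    and "\<forall>a\<in>set as. blockers (exchange x U) a = blockers U a"
proof -
  let ?ys = "as @ y # bs" and ?Z = "class_of x" and ?U' = "exchange x U"
  have adm_ys: "admissible I U ?ys" and next_x: "admissible_next I U ?ys x"
    using adm admissible_snoc[of I U ?ys x] by simp_all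
  then have x_U: "x \<notin> U" and x_ys: "x \<notin> set ?ys" and x_free: "\<forall>d\<in>tree_vertices I U ?ys. \<not> E x d"
    by (simp_all add: admissible_next_def)
  have xV: "x \<in> VG"
    using admissible_next_in_VG[OF next_x I U] .
  show same: "\<forall>a\<in>set as. blockers ?U' a = blockers U a"
  proof
    fix a
    assume a: "a \<in> set as"
    then have "a \<in> tree_vertices I U ?ys"
      unfolding tree_vertices_def by simp
    then have "\<not> E a x"
      using x_free E_sym[of a x] by blast
    moreover have "?Z \<notin> class_of ` blockers U a"
      using a unreached unfolding tree_classes_def by blast
    ultimately show "blockers ?U' a = blockers U a"
      by (rule blockers_exchange[OF xV])
  qed
  have "?Z \<inter> \<Union>(tree_classes I U as) = {}"
    by (rule class_disjoint_Union[OF tree_classes_subset_P[OF I U] class_of_in_P[OF xV] unreached])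
  moreover have "set (as @ [y]) \<subseteq> set ?ys"
    by auto
  ultimately have "insert x (U \<inter> ?Z) \<inter> (\<Union>(tree_classes I U as) \<union> set (as @ [y])) = {}"
    using mem_class_of[OF xV] x_ys admissible_disjoint[OF adm_ys] by blast
  moreover have "(U - ?U') \<union> (?U' - U) = insert x (U \<inter> ?Z)"
    using x_U unfolding exchange_def by blast
  ultimately have "((U - ?U') \<union> (?U' - U)) \<inter> (\<Union>(tree_classes I U as) \<union> set (as @ [y])) = {}"
    by simp
  moreover have "admissible I U (as @ [y])"
    using adm_ys admissible_appendD[of I U "as @ [y]" bs] by simp
  ultimately show "admissible I ?U' (as @ [y])"
    using admissible_change_base[OF _ same] by blast
qed

text \<open>
  A vertex \<open>x\<close> in a class \<open>Z\<close> outside \<open>I\<close> was reached through some earlier vertex \<open>y\<close> blocked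
  in \<open>Z\<close>. Exchanging \<open>x\<close> into \<open>U\<close> removes that blocker, so cutting the sequence after the first
  such \<open>y\<close> lowers the potential.
\<close>

lemma admissible_exchange_prefix:
  assumes I: "I \<subseteq> P" and U: "U \<subseteq> VG" and adm: "admissible I U (ys @ x # rest)"
    and blocked: "\<forall>y\<in>set ys. blockers U y \<noteq> {}" and new: "class_of x \<notin> I"
  shows "\<exists>zs. admissible I (exchange x U) zs
    \<and> (potential (exchange x U) zs, potential U (ys @ x # rest)) \<in> lex less_than"
proof -
  have "admissible I U (ys @ [x])"
    using adm admissible_appendD[of I U "ys @ [x]" rest] by simp
  then have adm_ys: "admissible I U ys" and next_x: "admissible_next I U ys x"
    by (simp_all add: admissible_snoc)
  have xV: "x \<in> VG"
    using admissible_next_in_VG[OF next_x I U] .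
  obtain as y bs where ys: "ys = as @ y # bs" and hit: "class_of x \<in> class_of ` blockers U y"
    and unreached: "class_of x \<notin> tree_classes I U as"
    using first_hit_of_class[OF next_x I U new] by blast
  have adm_xs: "admissible I U (as @ y # bs @ [x])"
    using \<open>admissible I U (ys @ [x])\<close> ys by simp
  have "length ys \<le> card P"
    using card_tree_classes[OF adm_ys I U blocked] card_mono[OF finite_P tree_classes_subset_P[OF I U, of ys]]
    by linarith
  then have "length as < card P"
    using ys by simp
  moreover have "\<not> E y x"
    using next_x E_sym[of y x] ys unfolding admissible_next_def tree_vertices_def by auto
  then have "card (blockers (exchange x U) y) < card (blockers U y)"
    by (rule card_blockers_exchange_less[OF U xV _ hit])
  ultimately have "(potential (exchange x U) (as @ [y]), potential U (as @ y # bs @ x # rest)) \<in> lex less_than"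
    using admissible_exchange_unreached(2)[OF I U adm_xs unreached] by (intro potential_truncate_less)
  then show ?thesis
    using admissible_exchange_unreached(1)[OF I U adm_xs unreached] ys by auto
qed

text \<open>
  For a tree vertex in a class outside \<open>I\<close>, the blocker through which its class was reached is
  the single common vertex of \<open>S\<close> and \<open>T\<close> in that class, i.e. the vertex itself.
\<close>

lemma tree_vertex_has_tree_neighbour:
  assumes S: "IT S" and T: "IT T"
    and blocked: "\<forall>y\<in>set xs. blockers (S \<union> T) y \<noteq> {}"
    and dom_S: "\<forall>s\<in>S - T. \<exists>t\<in>T. E s t" and dom_T: "\<forall>t\<in>T - S. \<exists>s\<in>S. E t s"
    and d: "d \<in> tree_vertices (diff_classes S T) (S \<union> T) xs"
  shows "\<exists>d'\<in>tree_vertices (diff_classes S T) (S \<union> T) xs. E d d'"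
proof -
  let ?I = "diff_classes S T" and ?U = "S \<union> T"
  let ?W = "tree_classes ?I ?U xs" and ?D = "tree_vertices ?I ?U xs"
  have UV: "?U \<subseteq> VG"
    using IT_subset[OF S] IT_subset[OF T] by blast
  have W_P: "?W \<subseteq> P"
    by (rule tree_classes_subset_P[OF diff_classes_subset_P UV])
  have in_tree: "u \<in> ?D" if "u \<in> ?U" "class_of u \<in> ?W" for u
    using that mem_class_of[of u] UV unfolding tree_vertices_def by blast
  consider (seq) "d \<in> set xs" | (tree) "d \<in> ?U" "class_of d \<in> ?W"
    using d class_of_in_Union[OF W_P, of d] unfolding tree_vertices_def by blast
  then show ?thesis
  proof cases
    case seq
    then obtain u where "u \<in> blockers ?U d"
      using blocked by blast
    moreover from this have "class_of u \<in> ?W"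
      using seq unfolding tree_classes_def by blast
    ultimately show ?thesis
      using in_tree unfolding blockers_def by blast
  next
    case tree
    show ?thesis
    proof (cases "class_of d \<in> ?I")
      case True
      then have "\<exists>t. E d t \<and> t \<in> ?U \<and> class_of t \<in> ?I"
        using diff_class_vertex_neighbour[OF S T dom_S dom_T tree(1)] by blast
      then show ?thesis
        using in_tree unfolding tree_classes_def by blast
    next
      case False
      then obtain y u where y: "y \<in> set xs" "u \<in> blockers ?U y" "class_of u = class_of d"
        using tree(2) unfolding tree_classes_def by auto
      obtain s where s: "?U \<inter> class_of d = {s}"
        using Un_Int_agreeing_class[OF S T _ False] class_of_in_P tree(1) UV by blast
      have "u \<in> ?U \<inter> class_of d" "d \<in> ?U \<inter> class_of d"
        using y(2,3) tree(1) UV mem_class_of[of u] mem_class_of[of d] unfolding blockers_def by auto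
      then have "u = d"
        using s by auto
      then have "E d y"
        using y(2) E_sym unfolding blockers_def by blast
      then show ?thesis
        using y(1) unfolding tree_vertices_def by blast
    qed
  qed
qed

lemma card_Un_Int_Union_le:
  assumes S: "IT S" and T: "IT T" and W: "W \<subseteq> P"
  shows "card ((S \<union> T) \<inter> \<Union>W) \<le> card W + card (diff_classes S T)"
proof -
  have "card (S \<inter> \<Union>W) \<le> card W"
  proof (rule card_inj_on_le)
    show "inj_on class_of (S \<inter> \<Union>W)"
      using inj_on_class_of_IT[OF S] by (rule inj_on_subset) blast
    show "class_of ` (S \<inter> \<Union>W) \<subseteq> W"
      using class_of_in_Union[OF W] by blast
  qed (rule finite_subset[OF W finite_P])
  moreover have "card (T - S) \<le> card (diff_classes S T)"
  proof (rule card_inj_on_le)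
    show "inj_on class_of (T - S)"
      using inj_on_class_of_IT[OF T] by (rule inj_on_subset) blast
    show "class_of ` (T - S) \<subseteq> diff_classes S T"
      using IT_subset[OF T] by (auto intro!: class_of_in_diff_classes)
  qed (rule finite_subset[OF diff_classes_subset_P finite_P])
  moreover have "(S \<union> T) \<inter> \<Union>W \<subseteq> (S \<inter> \<Union>W) \<union> (T - S)"
    by blast
  then have "card ((S \<union> T) \<inter> \<Union>W) \<le> card ((S \<inter> \<Union>W) \<union> (T - S))"
    using finite_IT[OF S] finite_IT[OF T] by (intro card_mono) auto
  ultimately show ?thesis
    using card_Un_le[of "S \<inter> \<Union>W" "T - S"] by linarith
qed

lemma card_tree_vertices_le:
  assumes S: "IT S" and T: "IT T"
    and adm: "admissible (diff_classes S T) (S \<union> T) xs"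
    and blocked: "\<forall>y\<in>set xs. blockers (S \<union> T) y \<noteq> {}"
  shows "card (tree_vertices (diff_classes S T) (S \<union> T) xs)
    \<le> 2 * card (tree_classes (diff_classes S T) (S \<union> T) xs)"
proof -
  let ?I = "diff_classes S T" and ?U = "S \<union> T"
  let ?W = "tree_classes ?I ?U xs"
  have UV: "?U \<subseteq> VG"
    using IT_subset[OF S] IT_subset[OF T] by blast
  have "card (tree_vertices ?I ?U xs) \<le> card (?U \<inter> \<Union>?W) + length xs"
    unfolding tree_vertices_def using card_Un_le[of "?U \<inter> \<Union>?W" "set xs"] card_length[of xs]
    by linarith
  moreover have "card (?U \<inter> \<Union>?W) \<le> card ?W + card ?I"
    by (rule card_Un_Int_Union_le[OF S T tree_classes_subset_P[OF diff_classes_subset_P UV]])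
  moreover have "card ?I + length xs \<le> card ?W"
    by (rule card_tree_classes[OF adm diff_classes_subset_P UV blocked])
  ultimately show ?thesis
    by linarith
qed

section \<open>Moving two transversals closer\<close>

definition approachable :: "'a set \<Rightarrow> 'a set \<Rightarrow> bool" where
  "approachable S T \<longleftrightarrow> (\<exists>S' T'. IT S' \<and> IT T' \<and> adj\<^sup>*\<^sup>* S S' \<and> adj\<^sup>*\<^sup>* T T'
     \<and> card (S' - T') < card (S - T))"

lemma approachable_commute: "IT S \<Longrightarrow> IT T \<Longrightarrow> approachable T S \<Longrightarrow> approachable S T"
  unfolding approachable_def using card_Diff_IT_commute by metis

lemma approachable_trans:
  assumes "adj\<^sup>*\<^sup>* S S'" "adj\<^sup>*\<^sup>* T T'" "card (S' - T') = card (S - T)" "approachable S' T'"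
  shows "approachable S T"
  using assms unfolding approachable_def by (metis rtranclp_trans)

lemma approachable_exchange_one:
  assumes S: "IT S" and T: "IT T" and t: "t \<in> T - S" and free: "\<forall>s\<in>S. \<not> E t s"
  shows "approachable S T"
proof -
  have tV: "t \<in> VG"
    using t IT_subset[OF T] by blast
  have "adj S (exchange t S)"
    using RG_adj_exchange[OF S tV] t free by blast
  moreover have "card (exchange t S - T) < card (S - T)"
    using exchange_Diff[of t T S] t card_Diff_diff_class_less[OF S T class_of_in_diff_classes] tV
    by simp
  ultimately show ?thesis
    unfolding approachable_def using T RG_adj_IT by blast
qed

lemma approachable_if_exchangeable:
  assumes S: "IT S" and T: "IT T"
    and "(\<exists>t\<in>T - S. \<forall>s\<in>S. \<not> E t s) \<or> (\<exists>s\<in>S - T. \<forall>t\<in>T. \<not> E s t)"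
  shows "approachable S T"
  using assms(3) approachable_exchange_one[OF S T] approachable_exchange_one[OF T S]
    approachable_commute[OF S T] by blast

lemma approachable_exchange_both:
  assumes S: "IT S" and T: "IT T" and x: "x \<in> VG" "x \<notin> S \<union> T"
    and free: "\<forall>u\<in>S \<union> T. \<not> E x u" and differ: "class_of x \<in> diff_classes S T"
  shows "approachable S T"
proof -
  have "adj S (exchange x S)" "adj T (exchange x T)"
    using RG_adj_exchange[OF S x(1)] RG_adj_exchange[OF T x(1)] x(2) free by blast+
  moreover have "card (exchange x S - exchange x T) < card (S - T)"
    using exchange_Diff_exchange[OF x(1)] card_Diff_diff_class_less[OF S T differ] by simp
  ultimately show ?thesis
    unfolding approachable_def using RG_adj_IT by blast
qed

lemma approachable_or_prune:
  assumes S: "IT S" and T: "IT T"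
    and adm: "admissible (diff_classes S T) (S \<union> T) (ys @ x # rest)"
    and blocked: "\<forall>y\<in>set ys. blockers (S \<union> T) y \<noteq> {}" and free: "blockers (S \<union> T) x = {}"
  shows "approachable S T \<or> (\<exists>S' T' zs. adj S S' \<and> adj T T' \<and> S' - T' = S - T
    \<and> diff_classes S' T' = diff_classes S T \<and> admissible (diff_classes S T) (S' \<union> T') zs
    \<and> (potential (S' \<union> T') zs, potential (S \<union> T) (ys @ x # rest)) \<in> lex less_than)"
proof -
  let ?I = "diff_classes S T" and ?U = "S \<union> T"
  have UV: "?U \<subseteq> VG"
    using IT_subset[OF S] IT_subset[OF T] by blast
  have "admissible_next ?I ?U ys x"
    using adm admissible_appendD[of ?I ?U "ys @ [x]" rest] by (simp add: admissible_snoc)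
  then have xV: "x \<in> VG" and x_U: "x \<notin> ?U"
    using admissible_next_in_VG[OF _ diff_classes_subset_P UV] unfolding admissible_next_def by blast+
  have x_free: "\<forall>u\<in>?U. \<not> E x u"
    using free unfolding blockers_def by blast
  show ?thesis
  proof (cases "class_of x \<in> ?I")
    case True
    then show ?thesis
      using approachable_exchange_both[OF S T xV x_U x_free] by blast
  next
    case agree: False
    have "adj S (exchange x S)" "adj T (exchange x T)"
      using RG_adj_exchange[OF S xV] RG_adj_exchange[OF T xV] x_U x_free by blast+
    moreover have "exchange x S - exchange x T = S - T"
      using exchange_Diff_exchange[OF xV] Diff_agreeing_class[OF xV agree] by simp
    moreover have "diff_classes (exchange x S) (exchange x T) = ?I"
      by (rule diff_classes_exchange[OF xV agree])
    moreover obtain zs where "admissible ?I (exchange x ?U) zs"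
      "(potential (exchange x ?U) zs, potential ?U (ys @ x # rest)) \<in> lex less_than"
      using admissible_exchange_prefix[OF diff_classes_subset_P UV adm blocked agree] by blast
    ultimately show ?thesis
      unfolding exchange_Un[symmetric] by blast
  qed
qed

end

locale large_partition = partitioned_graph +
  assumes large_classes: "\<forall>X\<in>P. card X \<ge> 2 * max_degree VG E + 1"
begin

lemma card_Union_classes_ge:
  assumes "W \<subseteq> P"
  shows "(2 * \<Delta> + 1) * card W \<le> card (\<Union>W)"
proof -
  have "pairwise disjnt W"
    using pairwise_subset[OF partition_onD2[OF partition] assms] .
  then have "card (\<Union>W) = (\<Sum>X\<in>W. card X)"
    by (rule card_Union_disjoint) (use assms finite_class in blast)
  moreover have "card W * (2 * \<Delta> + 1) \<le> (\<Sum>X\<in>W. card X)"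
    using sum_bounded_below[of W "2 * \<Delta> + 1" card] large_classes assms by auto
  ultimately show ?thesis
    by (simp add: mult.commute)
qed

text \<open>
  The tree spans at most \<open>2 |W|\<close> vertices, which have at most \<open>2 |W| \<Delta>\<close> neighbours, while the
  reached classes \<open>W\<close> contain at least \<open>(2 \<Delta> + 1) |W|\<close> vertices.
\<close>

lemma admissible_extend:
  assumes S: "IT S" and T: "IT T" and ST: "S \<noteq> T"
    and adm: "admissible (diff_classes S T) (S \<union> T) xs"
    and blocked: "\<forall>y\<in>set xs. blockers (S \<union> T) y \<noteq> {}"
    and dom_S: "\<forall>s\<in>S - T. \<exists>t\<in>T. E s t" and dom_T: "\<forall>t\<in>T - S. \<exists>s\<in>S. E t s"
  shows "\<exists>x. admissible (diff_classes S T) (S \<union> T) (xs @ [x])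
    \<and> (potential (S \<union> T) (xs @ [x]), potential (S \<union> T) xs) \<in> lex less_than"
proof -
  let ?I = "diff_classes S T" and ?U = "S \<union> T"
  let ?W = "tree_classes ?I ?U xs" and ?D = "tree_vertices ?I ?U xs"
  have UV: "?U \<subseteq> VG"
    using IT_subset[OF S] IT_subset[OF T] by blast
  have W_P: "?W \<subseteq> P"
    by (rule tree_classes_subset_P[OF diff_classes_subset_P UV])
  have "?W \<noteq> {}"
    using diff_classes_nonempty[OF S T ST] unfolding tree_classes_def by blast
  then have "card ?W > 0"
    using finite_subset[OF W_P finite_P] by (simp add: card_gt_0_iff)
  have "card ?D * \<Delta> \<le> 2 * card ?W * \<Delta>"
    using card_tree_vertices_le[OF S T adm blocked] by (rule mult_le_mono1)
  also have "\<dots> < (2 * \<Delta> + 1) * card ?W"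
    using \<open>card ?W > 0\<close> by (simp add: algebra_simps)
  also have "\<dots> \<le> card (\<Union>?W)"
    by (rule card_Union_classes_ge[OF W_P])
  finally have "card ?D * \<Delta> < card (\<Union>?W)" .
  moreover have "finite ?D"
    using finite_IT[OF S] finite_IT[OF T] unfolding tree_vertices_def by blast
  ultimately obtain x where x: "x \<in> \<Union>?W" "\<forall>d\<in>?D. \<not> E x d"
    using exists_non_neighbour by blast
  then have "x \<notin> ?D"
    using tree_vertex_has_tree_neighbour[OF S T blocked dom_S dom_T] by blast
  then have "admissible_next ?I ?U xs x"
    using x unfolding admissible_next_def tree_vertices_def by blast
  moreover have "length xs < card P"
    by (rule length_admissible_less[OF adm diff_classes_subset_P diff_classes_nonempty[OF S T ST] UV blocked])
  ultimately show ?thesis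
    using adm admissible_snoc potential_snoc_less[OF UV] by blast
qed

lemma approachable_if_admissible:
  assumes "IT S" "IT T" "S \<noteq> T" "admissible (diff_classes S T) (S \<union> T) xs"
  shows "approachable S T"
  using assms
proof (induction "potential (S \<union> T) xs" arbitrary: S T xs
    rule: wf_induct_rule[OF wf_lex[OF wf_less_than], case_names less])
  case less
  note S = less.prems(1) and T = less.prems(2) and ST = less.prems(3) and adm = less.prems(4)
  let ?U = "S \<union> T"
  consider (exchangeable) "(\<exists>t\<in>T - S. \<forall>s\<in>S. \<not> E t s) \<or> (\<exists>s\<in>S - T. \<forall>t\<in>T. \<not> E s t)"
    | (unblocked) ys x rest where "xs = ys @ x # rest" "blockers ?U x = {}"
        "\<forall>y\<in>set ys. blockers ?U y \<noteq> {}"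
    | (blocked) "\<forall>s\<in>S - T. \<exists>t\<in>T. E s t" "\<forall>t\<in>T - S. \<exists>s\<in>S. E t s"
        "\<forall>y\<in>set xs. blockers ?U y \<noteq> {}"
  proof (cases "\<exists>y\<in>set xs. blockers ?U y = {}")
    case True
    from split_list_first_prop[OF True] show ?thesis
      using that(2) by blast
  next
    case False
    then show ?thesis
      using that(1,3) by blast
  qed
  then show ?case
  proof cases
    case exchangeable
    then show ?thesis
      by (rule approachable_if_exchangeable[OF S T])
  next
    case (unblocked ys x rest)
    show ?thesis
    proof (rule ccontr)
      assume "\<not> approachable S T"
      then obtain S' T' zs where S'T': "adj S S'" "adj T T'" "S' - T' = S - T"
        "diff_classes S' T' = diff_classes S T" "admissible (diff_classes S' T') (S' \<union> T') zs"
        "(potential (S' \<union> T') zs, potential ?U xs) \<in> lex less_than"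
        using approachable_or_prune[OF S T adm[unfolded unblocked(1)] unblocked(3,2)]
        unfolding unblocked(1) by auto
      moreover have "S' \<noteq> T'"
        using S'T'(4) diff_classes_nonempty[OF S T ST] by (auto simp: diff_classes_self)
      ultimately have "approachable S' T'"
        using less.hyps RG_adj_IT by blast
      then show False
        using approachable_trans[OF r_into_rtranclp[of adj, OF S'T'(1)] r_into_rtranclp[of adj, OF S'T'(2)]]
          S'T'(3) \<open>\<not> approachable S T\<close> by simp
    qed
  next
    case blocked
    then show ?thesis
      using admissible_extend[OF S T ST adm blocked(3,1,2)] less.hyps S T ST by blast
  qed
qed

lemma RG_reachable:
  assumes "IT S" "IT T"
  shows "adj\<^sup>*\<^sup>* S T"
  using assms
proof (induction "card (S - T)" arbitrary: S T rule: less_induct)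
  case less
  show ?case
  proof (cases "S = T")
    case False
    then obtain S' T' where "IT S'" "IT T'" "adj\<^sup>*\<^sup>* S S'" "adj\<^sup>*\<^sup>* T T'" "card (S' - T') < card (S - T)"
      using approachable_if_admissible[OF less.prems False admissible_Nil] unfolding approachable_def by blast
    moreover have "symp adj\<^sup>*\<^sup>*"
      using RG_adj_sym by (intro symp_rtranclp sympI)
    ultimately show ?thesis
      using less.hyps by (metis rtranclp_trans sympD)
  qed simp
qed

end

theorem corollary6p3:
  fixes VG :: "'a set" and E :: "'a \<Rightarrow> 'a \<Rightarrow> bool" and P :: "'a set set"
  assumes "simple_graph VG E"
    and "partition_on VG P"
    and "\<forall>X\<in>P. card X \<ge> 2 * max_degree VG E + 1"
  shows "RG_connected VG E P"
proof -
  interpret large_partition VG E P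
    using assms by unfold_locales
  show ?thesis
    unfolding RG_connected_def using RG_reachable by blast
qed

end
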